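(* Let $|\psi\rangle$ be the $N$-qubit linear cluster state ($N\ge2$) and $\rho_N(x)=(\mathbb{1}+x|\psi\rangle\langle\psi|)/(2^N+x)$. Measuring an end qubit in the $Z$-basis (with the corresponding local correction) maps $\rho_N(x)$ to $\rho_{N-1}(x/2)$; hence reducing to a two-qubit state by $Z$-measurements yields $\rho_2(x/2^{N-2})$. This two-qubit state is purifiable to a Bell pair if and only if the fidelity of the original state satisfies $$\langle\psi|\rho_N(x)|\psi\rangle>\frac13+\frac{1}{3\cdot2^{N-1}}.$$
   Context: The linear cluster state is the graph state of a path graph: the common $+1$ eigenstate of $K_i=X_i\prod_{\{i,j\}\in E}Z_j$. Known input: a two-qubit Bell-diagonal state with weight $\lambda_{00}$ on the target Bell state is purifiable iff $\lambda_{00}>1/2$. *)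

theory Defs
  imports Complex_Main "Jordan_Normal_Form.Matrix"
begin

text \<open>Computational basis index
  i < 2^N; qubit k (0-based, k < N) carries the bit (i div 2^k) mod 2.
  The linear cluster state has edges {k, k+1}, k+1 < N; qubit N-1 is an end qubit.\<close>

definition bit :: "nat \<Rightarrow> nat \<Rightarrow> nat" where
  "bit i k = (i div 2 ^ k) mod 2"

text \<open>Graph state of the path graph: the product of CZ over the edges applied to
  the uniform superposition (equivalently, the common +1 eigenstate of the
  stabilizers K_i = X_i prod Z_j).\<close>
definition cluster_vec :: "nat \<Rightarrow> complex vec" where
  "cluster_vec N = vec (2 ^ N)
     (\<lambda>i. complex_of_real ((-1) ^ (\<Sum>k<N - 1. bit i k * bit i (Suc k)) / sqrt (2 ^ N)))"

definition proj :: "complex vec \<Rightarrow> complex mat" where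
  "proj v = mat (dim_vec v) (dim_vec v) (\<lambda>(i, j). v $ i * cnj (v $ j))"

definition mtrace :: "complex mat \<Rightarrow> complex" where
  "mtrace A = (\<Sum>i<dim_row A. A $$ (i, i))"

definition rho :: "nat \<Rightarrow> real \<Rightarrow> complex mat" where
  "rho N x = complex_of_real (1 / (2 ^ N + x)) \<cdot>\<^sub>m
     (1\<^sub>m (2 ^ N) + complex_of_real x \<cdot>\<^sub>m proj (cluster_vec N))"

text \<open>Fidelity <psi|rho|psi> (real part; it is real for Hermitian rho).\<close>
definition fidelity :: "complex vec \<Rightarrow> complex mat \<Rightarrow> real" where
  "fidelity v A = Re (\<Sum>i<dim_vec v. \<Sum>j<dim_vec v. cnj (v $ i) * A $$ (i, j) * v $ j)"

definition pauliZ :: "nat \<Rightarrow> nat \<Rightarrow> complex mat" where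
  "pauliZ n k = mat (2 ^ n) (2 ^ n) (\<lambda>(i, j). if i = j then (-1) ^ bit i k else 0)"

text \<open>Z-basis measurement of the end qubit N-1 of an N-qubit state with outcome b:
  unnormalised post-measurement state (<b| rho |b>) on the remaining N-1 qubits.\<close>
definition zmeas_block :: "nat \<Rightarrow> nat \<Rightarrow> complex mat \<Rightarrow> complex mat" where
  "zmeas_block N b A = mat (2 ^ (N - 1)) (2 ^ (N - 1))
     (\<lambda>(i, j). A $$ (i + b * 2 ^ (N - 1), j + b * 2 ^ (N - 1)))"

definition zmeas_step :: "nat \<Rightarrow> nat \<Rightarrow> complex mat \<Rightarrow> complex mat" where
  "zmeas_step N b A =
     (let B = zmeas_block N b A;
          U = pauliZ (N - 1) (N - 2) ^\<^sub>m b
      in (1 / mtrace B) \<cdot>\<^sub>m (U * B * U))"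

fun zmeas_seq :: "nat \<Rightarrow> nat list \<Rightarrow> complex mat \<Rightarrow> complex mat" where
  "zmeas_seq N [] A = A"
| "zmeas_seq N (b # bs) A = zmeas_seq (N - 1) bs (zmeas_step N b A)"

text \<open>Bell-diagonal two-qubit state w.r.t. the target Bell state psi_2 (the two-qubit
  cluster state, locally equivalent to a standard Bell pair) and its basis
  Z^a (x) Z^c psi_2, with weight lambda_00 on the target. By the known input, such
  a state is purifiable to a Bell pair iff lambda_00 > 1/2.\<close>
definition bell_basis :: "nat \<Rightarrow> nat \<Rightarrow> complex vec" where
  "bell_basis a c = (pauliZ 2 0 ^\<^sub>m a * pauliZ 2 1 ^\<^sub>m c) *\<^sub>v cluster_vec 2"

definition purifiable :: "complex mat \<Rightarrow> bool" where
  "purifiable A \<longleftrightarrow> (\<exists>w :: nat \<Rightarrow> nat \<Rightarrow> real.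
      (\<forall>a<2. \<forall>c<2. w a c \<ge> 0) \<and>
      A = complex_of_real (w 0 0) \<cdot>\<^sub>m proj (bell_basis 0 0)
        + complex_of_real (w 0 1) \<cdot>\<^sub>m proj (bell_basis 0 1)
        + complex_of_real (w 1 0) \<cdot>\<^sub>m proj (bell_basis 1 0)
        + complex_of_real (w 1 1) \<cdot>\<^sub>m proj (bell_basis 1 1) \<and>
      w 0 0 > 1 / 2)"

end

theory Submission
  imports Defs
begin

(* The amplitudes of the cluster state are s(i) / sqrt (2^N) with the sign
   s(i) = (-1)^(sum of b_k b_(k+1) over adjacent bits of i). Fixing the top bit of i to b
   multiplies s(i) by (-1)^(b b_(N-2)), which is the action of Z^b on the neighbouring qubit.
   Hence the b-block of rho_N(x) is Z^b rho_(N-1)(x/2) Z^b / 2, and renormalising and undoing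
   Z^b gives rho_(N-1)(x/2); iterating yields rho_2(x / 2^(N-2)).
   Since the Bell signs are complete, rho_2(y) is Bell-diagonal with non-negative weights for
   y >= -1, and by orthonormality of the Bell basis its weight on the target state is its
   fidelity (1 + y) / (4 + y). So the criterion weight > 1/2 reads y > 2, i.e. x > 2^(N-1),
   and this is exactly the stated bound on the fidelity (1 + x) / (2^N + x). *)

lemma mat_diag_power: "mat_diag n f ^\<^sub>m k = mat_diag n (\<lambda>i. f i ^ k)"
proof (induction k)
  case (Suc k)
  have "(\<lambda>i. f i ^ k * f i) = (\<lambda>i. f i ^ Suc k)"
    by (simp only: power_Suc2)
  with Suc show ?case
    by simp
qed (simp add: mat_diag_def)

lemma mat_diag_mult_vec_index:
  assumes "dim_vec v = n" "i < n"
  shows "(mat_diag n f *\<^sub>v v) $ i = f i * v $ i"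
proof -
  have "(mat_diag n f *\<^sub>v v) $ i = (\<Sum>j<n. (if i = j then f j else 0) * v $ j)"
    using assms by (simp add: mat_diag_def scalar_prod_def lessThan_atLeast0)
  also have "\<dots> = (\<Sum>j<n. if i = j then f j * v $ j else 0)"
    by (rule sum.cong) auto
  finally show ?thesis
    using assms(2) by simp
qed

lemma mat_diag_sandwich:
  assumes "A \<in> carrier_mat n n"
  shows "mat_diag n f * A * mat_diag n f = mat n n (\<lambda>(i, j). f i * A $$ (i, j) * f j)"
  using assms
  by (auto simp: mat_diag_mult_left[OF assms] mat_diag_mult_right[of "mat n n _" n n] intro!: eq_matI)

lemma mat_diag_sandwich_involutive:
  assumes "A \<in> carrier_mat n n" and "\<And>i. i < n \<Longrightarrow> f i * f i = (1 :: 'a :: comm_ring_1)"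
  shows "mat_diag n f * (mat_diag n f * A * mat_diag n f) * mat_diag n f = A"
proof -
  have "f i * (f i * a * f j) * f j = a" if "i < n" "j < n" for i j a
    using assms(2)[OF that(1)] assms(2)[OF that(2)]
    by (metis mult.assoc mult.commute mult_1_right)
  moreover have "mat_diag n f * mat n n g * mat_diag n f = mat n n (\<lambda>(i, j). f i * g (i, j) * f j)" for g
    by (subst mat_diag_sandwich) (auto intro!: eq_matI)
  ultimately show ?thesis
    using assms(1) by (auto simp: mat_diag_sandwich[OF assms(1)] intro!: eq_matI)
qed

lemma mtrace_mat_diag_sandwich:
  assumes "A \<in> carrier_mat n n" and "\<And>i. i < n \<Longrightarrow> f i * f i = 1"
  shows "mtrace (mat_diag n f * A * mat_diag n f) = mtrace A"
proof -
  have diag: "f i * A $$ (i, i) * f i = A $$ (i, i)" if "i < n" for i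
    using assms(2)[OF that] by (metis mult.commute mult.left_commute mult_1_right)
  have "(\<Sum>i<n. f i * A $$ (i, i) * f i) = mtrace A"
    using assms(1) unfolding mtrace_def by (intro sum.cong) (auto simp: diag)
  then show ?thesis
    using assms(1) by (simp add: mat_diag_sandwich mtrace_def)
qed

lemma mtrace_smult: "A \<in> carrier_mat n n \<Longrightarrow> mtrace (c \<cdot>\<^sub>m A) = c * mtrace A"
  by (simp add: mtrace_def sum_distrib_left)

lemma cnj_mult_self: "cnj z * z = of_real (cmod z ^ 2)"
  by (metis complex_norm_square mult.commute)

lemma dim_proj [simp]: "dim_row (proj v) = dim_vec v" "dim_col (proj v) = dim_vec v"
  by (simp_all add: proj_def)

lemma proj_index: "i < dim_vec v \<Longrightarrow> j < dim_vec v \<Longrightarrow> proj v $$ (i, j) = v $ i * cnj (v $ j)"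
  by (simp add: proj_def)

lemma fidelity_add:
  assumes "A \<in> carrier_mat (dim_vec v) (dim_vec v)" "B \<in> carrier_mat (dim_vec v) (dim_vec v)"
  shows "fidelity v (A + B) = fidelity v A + fidelity v B"
  using assms by (simp add: fidelity_def sum.distrib algebra_simps)

lemma fidelity_smult_real:
  assumes "A \<in> carrier_mat (dim_vec v) (dim_vec v)"
  shows "fidelity v (of_real c \<cdot>\<^sub>m A) = c * fidelity v A"
  using assms by (simp add: fidelity_def sum_distrib_left mult_ac)

lemma fidelity_one: "fidelity v (1\<^sub>m (dim_vec v)) = (\<Sum>i<dim_vec v. cmod (v $ i) ^ 2)"
proof -
  have "(\<Sum>j<dim_vec v. cnj (v $ i) * 1\<^sub>m (dim_vec v) $$ (i, j) * v $ j) = cnj (v $ i) * v $ i"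
    if "i < dim_vec v" for i
  proof -
    have "(\<Sum>j<dim_vec v. cnj (v $ i) * 1\<^sub>m (dim_vec v) $$ (i, j) * v $ j)
        = (\<Sum>j<dim_vec v. if i = j then cnj (v $ i) * v $ j else 0)"
      using that by (intro sum.cong) auto
    then show ?thesis
      using that by simp
  qed
  then show ?thesis
    by (simp add: fidelity_def cnj_mult_self)
qed

lemma fidelity_proj:
  assumes "dim_vec u = dim_vec v"
  shows "fidelity v (proj u) = cmod (\<Sum>i<dim_vec v. cnj (v $ i) * u $ i) ^ 2"
proof -
  let ?z = "\<Sum>i<dim_vec v. cnj (v $ i) * u $ i"
  have "(\<Sum>i<dim_vec v. \<Sum>j<dim_vec v. cnj (v $ i) * proj u $$ (i, j) * v $ j)
      = (\<Sum>i<dim_vec v. \<Sum>j<dim_vec v. (cnj (v $ i) * u $ i) * cnj (cnj (v $ j) * u $ j))"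
    using assms by (intro sum.cong) (simp_all add: proj_index mult_ac)
  also have "\<dots> = ?z * cnj ?z"
    by (simp add: sum_product)
  finally have "(\<Sum>i<dim_vec v. \<Sum>j<dim_vec v. cnj (v $ i) * proj u $$ (i, j) * v $ j) = of_real (cmod ?z ^ 2)"
    by (simp only: complex_norm_square)
  then show ?thesis
    by (simp only: fidelity_def Re_complex_of_real)
qed

lemma bit_add_high:
  assumes "i < 2 ^ m" "k < m"
  shows "bit (i + b * 2 ^ m) k = bit i k"
proof -
  have "(2::nat) ^ m = 2 * 2 ^ (m - Suc k) * 2 ^ k"
    using assms(2) by (simp flip: power_add power_Suc)
  then have split: "i + b * 2 ^ m = i + (2 * (b * 2 ^ (m - Suc k))) * 2 ^ k"
    by simp
  have "(i + b * 2 ^ m) div 2 ^ k = i div 2 ^ k + 2 * (b * 2 ^ (m - Suc k))"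
    unfolding split by simp
  then show ?thesis
    by (simp add: bit_def)
qed

lemma bit_add_high_top:
  assumes "i < 2 ^ m" "b < 2"
  shows "bit (i + b * 2 ^ m) m = b"
  using assms by (simp add: bit_def)

definition cluster_sign :: "nat \<Rightarrow> nat \<Rightarrow> real" where
  "cluster_sign N i = (-1) ^ (\<Sum>k<N - 1. bit i k * bit i (Suc k))"

lemma cluster_sign_Suc:
  assumes "1 \<le> m" "i < 2 ^ m" "b < 2"
  shows "cluster_sign (Suc m) (i + b * 2 ^ m) = (-1) ^ (b * bit i (m - 1)) * cluster_sign m i"
proof -
  let ?j = "i + b * 2 ^ m"
  have low: "bit ?j k = bit i k" if "k < m" for k
    using bit_add_high[OF assms(2) that] .
  have "(\<Sum>k<m. bit ?j k * bit ?j (Suc k)) = (\<Sum>k<m - 1. bit ?j k * bit ?j (Suc k)) + bit ?j (m - 1) * bit ?j m"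
    using sum.lessThan_Suc[of "\<lambda>k. bit ?j k * bit ?j (Suc k)" "m - 1"] assms(1) by simp
  also have "\<dots> = (\<Sum>k<m - 1. bit i k * bit i (Suc k)) + bit i (m - 1) * b"
    using assms by (simp add: low bit_add_high_top)
  finally show ?thesis
    by (simp add: cluster_sign_def power_add mult.commute)
qed

lemma cluster_sign_square: "cluster_sign N i * cluster_sign N i = 1"
  by (simp add: cluster_sign_def)

lemma dim_cluster_vec [simp]: "dim_vec (cluster_vec N) = 2 ^ N"
  by (simp add: cluster_vec_def)

lemma cluster_vec_index: "i < 2 ^ N \<Longrightarrow> cluster_vec N $ i = of_real (cluster_sign N i / sqrt (2 ^ N))"
  by (simp add: cluster_vec_def cluster_sign_def)

lemma cmod_cluster_vec_index:
  assumes "i < 2 ^ N"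
  shows "cmod (cluster_vec N $ i) ^ 2 = 1 / 2 ^ N"
proof -
  have "cmod (cluster_vec N $ i) ^ 2 = (cluster_sign N i / sqrt (2 ^ N)) ^ 2"
    by (simp only: cluster_vec_index[OF assms] norm_of_real power2_abs)
  also have "\<dots> = 1 / 2 ^ N"
    using cluster_sign_square[of N i] by (simp add: power_divide power2_eq_square)
  finally show ?thesis .
qed

lemma cluster_vec_norm: "(\<Sum>i<2 ^ N. cmod (cluster_vec N $ i) ^ 2) = 1"
  by (simp add: cmod_cluster_vec_index)

lemma dim_rho [simp]: "dim_row (rho N x) = 2 ^ N" "dim_col (rho N x) = 2 ^ N"
  by (simp_all add: rho_def)

lemma rho_carrier: "rho N x \<in> carrier_mat (2 ^ N) (2 ^ N)"
  by (simp add: rho_def proj_def cluster_vec_def)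

lemma rho_index:
  assumes "i < 2 ^ N" "j < 2 ^ N"
  shows "rho N x $$ (i, j) =
    of_real ((of_bool (i = j) + x * cluster_sign N i * cluster_sign N j / 2 ^ N) / (2 ^ N + x))"
proof -
  have "rho N x $$ (i, j) =
      of_real (1 / (2 ^ N + x)) * (of_bool (i = j) + of_real x * (cluster_vec N $ i * cnj (cluster_vec N $ j)))"
    using assms by (simp add: rho_def proj_index)
  also have "cluster_vec N $ i * cnj (cluster_vec N $ j) =
      of_real (cluster_sign N i / sqrt (2 ^ N) * (cluster_sign N j / sqrt (2 ^ N)))"
    by (simp only: cluster_vec_index assms complex_cnj_complex_of_real of_real_mult)
  also have "cluster_sign N i / sqrt (2 ^ N) * (cluster_sign N j / sqrt (2 ^ N)) =
      cluster_sign N i * cluster_sign N j / 2 ^ N"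
    by simp
  finally show ?thesis
    by simp
qed

lemma mtrace_rho:
  assumes "2 ^ N + x \<noteq> 0"
  shows "mtrace (rho N x) = 1"
proof -
  have "mtrace (rho N x) = of_real (\<Sum>i<(2::nat) ^ N. (1 + x / 2 ^ N) / (2 ^ N + x))"
    unfolding mtrace_def of_real_sum using rho_carrier[of N x]
    by (intro sum.cong) (auto simp: rho_index cluster_sign_square mult.assoc)
  also have "(\<Sum>i<(2::nat) ^ N. (1 + x / 2 ^ N) / (2 ^ N + x)) = 2 ^ N * (1 + x / 2 ^ N) / (2 ^ N + x)"
    by simp
  also have "2 ^ N * (1 + x / 2 ^ N) = (2 ^ N + x :: real)"
    by (simp add: field_simps)
  finally show ?thesis
    using assms by simp
qed

lemma fidelity_rho: "fidelity (cluster_vec N) (rho N x) = (1 + x) / (2 ^ N + x)"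
proof -
  let ?\<psi> = "cluster_vec N"
  have P: "proj ?\<psi> \<in> carrier_mat (2 ^ N) (2 ^ N)"
    by (simp add: carrier_matI)
  have "(\<Sum>i<2 ^ N. cnj (?\<psi> $ i) * ?\<psi> $ i) = of_real (\<Sum>i<2 ^ N. cmod (?\<psi> $ i) ^ 2)"
    by (simp only: cnj_mult_self of_real_sum)
  then have "fidelity ?\<psi> (proj ?\<psi>) = 1"
    by (simp add: fidelity_proj cluster_vec_norm)
  have "fidelity ?\<psi> (rho N x) = 1 / (2 ^ N + x) * fidelity ?\<psi> (1\<^sub>m (2 ^ N) + of_real x \<cdot>\<^sub>m proj ?\<psi>)"
    unfolding rho_def using P by (intro fidelity_smult_real) auto
  also have "fidelity ?\<psi> (1\<^sub>m (2 ^ N) + of_real x \<cdot>\<^sub>m proj ?\<psi>)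
      = fidelity ?\<psi> (1\<^sub>m (2 ^ N)) + fidelity ?\<psi> (of_real x \<cdot>\<^sub>m proj ?\<psi>)"
    using P by (intro fidelity_add) auto
  also have "fidelity ?\<psi> (of_real x \<cdot>\<^sub>m proj ?\<psi>) = x"
    using fidelity_smult_real[of "proj ?\<psi>" ?\<psi>] P \<open>fidelity ?\<psi> (proj ?\<psi>) = 1\<close> by simp
  also have "fidelity ?\<psi> (1\<^sub>m (2 ^ N)) = 1"
    using fidelity_one[of ?\<psi>] cluster_vec_norm[of N] by simp
  finally show ?thesis
    by simp
qed

lemma pauliZ_power: "pauliZ n k ^\<^sub>m b = mat_diag (2 ^ n) (\<lambda>i. (-1) ^ (b * bit i k))"
proof -
  have "pauliZ n k = mat_diag (2 ^ n) (\<lambda>i. (-1) ^ bit i k)"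
    by (auto simp: pauliZ_def mat_diag_def intro!: eq_matI)
  moreover have "((-1 :: complex) ^ bit i k) ^ b = (-1) ^ (b * bit i k)" for i
    by (subst mult.commute) (rule power_mult[symmetric])
  ultimately show ?thesis
    by (simp add: mat_diag_power)
qed

lemma rho_entry_halving:
  fixes d t x :: real
  shows "(d + x * t / 2 ^ Suc m) / (2 ^ Suc m + x) = 1 / 2 * ((d + x / 2 * t / 2 ^ m) / (2 ^ m + x / 2))"
proof -
  have "(2::real) ^ m + x / 2 = (2 ^ Suc m + x) / 2" "x / 2 * t / 2 ^ m = x * t / 2 ^ Suc m"
    by simp_all
  then show ?thesis
    by simp
qed

lemma zmeas_block_rho:
  assumes "1 \<le> m" "b < 2"
  shows "zmeas_block (Suc m) b (rho (Suc m) x) =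
    pauliZ m (m - 1) ^\<^sub>m b * ((1 / 2) \<cdot>\<^sub>m rho m (x / 2)) * pauliZ m (m - 1) ^\<^sub>m b"
    (is "?block = ?rhs")
proof -
  let ?\<sigma> = "\<lambda>i. (-1::real) ^ (b * bit i (m - 1))"
  let ?s = "cluster_sign m"
  have shifted: "i + b * 2 ^ m < 2 ^ Suc m" if "i < 2 ^ m" for i
    using that assms(2) by (cases b) auto
  have entry: "(of_bool (i = j) + x * (?\<sigma> i * ?s i) * (?\<sigma> j * ?s j) / 2 ^ Suc m) / (2 ^ Suc m + x)
      = ?\<sigma> i * (1 / 2 * ((of_bool (i = j) + x / 2 * ?s i * ?s j / 2 ^ m) / (2 ^ m + x / 2))) * ?\<sigma> j"
    for i j
  proof -
    have "of_bool (i = j) + x * (?\<sigma> i * ?s i) * (?\<sigma> j * ?s j) / 2 ^ Suc m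
        = ?\<sigma> i * ?\<sigma> j * (of_bool (i = j) + x * (?s i * ?s j) / 2 ^ Suc m)"
      by (cases "i = j") (simp_all add: algebra_simps)
    then show ?thesis
      using rho_entry_halving[of "of_bool (i = j)" x "?s i * ?s j" m] by (simp add: mult_ac)
  qed
  show ?thesis
  proof (rule eq_matI)
    fix i j
    assume "i < dim_row ?rhs" and "j < dim_col ?rhs"
    then have i: "i < 2 ^ m" and j: "j < 2 ^ m"
      by (simp_all add: pauliZ_power mat_diag_sandwich rho_carrier)
    have "?block $$ (i, j) = rho (Suc m) x $$ (i + b * 2 ^ m, j + b * 2 ^ m)"
      using i j by (simp add: zmeas_block_def)
    also have "\<dots> = of_real ((of_bool (i = j) + x * (?\<sigma> i * ?s i) * (?\<sigma> j * ?s j) / 2 ^ Suc m) / (2 ^ Suc m + x))"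
      using i j assms by (simp only: rho_index shifted cluster_sign_Suc add_right_cancel)
    also have "\<dots> = ?rhs $$ (i, j)"
      unfolding entry using i j by (simp add: pauliZ_power mat_diag_sandwich rho_carrier rho_index)
    finally show "?block $$ (i, j) = ?rhs $$ (i, j)" .
  qed (simp_all add: zmeas_block_def pauliZ_power mat_diag_sandwich rho_carrier)
qed

lemma zmeas_step_rho:
  assumes "1 \<le> m" "b < 2" "2 ^ Suc m + x \<noteq> 0"
  shows "zmeas_step (Suc m) b (rho (Suc m) x) = rho m (x / 2)"
proof -
  let ?U = "pauliZ m (m - 1) ^\<^sub>m b"
  let ?R = "(1 / 2) \<cdot>\<^sub>m rho m (x / 2)"
  have U: "?U = mat_diag (2 ^ m) (\<lambda>i. (-1) ^ (b * bit i (m - 1)))"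
    by (rule pauliZ_power)
  have R: "?R \<in> carrier_mat (2 ^ m) (2 ^ m)"
    by (simp add: rho_carrier)
  have "2 ^ m + x / 2 \<noteq> 0"
    using assms(3) by simp
  then have unit_trace: "mtrace (rho m (x / 2)) = 1"
    by (rule mtrace_rho)
  have "mtrace (?U * ?R * ?U) = mtrace ?R"
    unfolding U using R by (rule mtrace_mat_diag_sandwich) simp
  also have "\<dots> = 1 / 2"
    using unit_trace by (simp add: mtrace_smult[OF rho_carrier])
  finally have trace: "mtrace (?U * ?R * ?U) = 1 / 2" .
  have qubits: "Suc m - 1 = m" "Suc m - 2 = m - 1"
    by simp_all
  have "zmeas_step (Suc m) b (rho (Suc m) x) = 2 \<cdot>\<^sub>m (?U * (?U * ?R * ?U) * ?U)"
    unfolding zmeas_step_def Let_def zmeas_block_rho[OF assms(1,2)] qubits trace by simp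
  also have "?U * (?U * ?R * ?U) * ?U = ?R"
    unfolding U using R by (rule mat_diag_sandwich_involutive) simp
  also have "2 \<cdot>\<^sub>m ?R = rho m (x / 2)"
    by (auto intro!: eq_matI)
  finally show ?thesis .
qed

lemma zmeas_seq_rho:
  assumes "1 \<le> M" "x \<ge> -1" "set bs \<subseteq> {0, 1}"
  shows "zmeas_seq (M + length bs) bs (rho (M + length bs) x) = rho M (x / 2 ^ length bs)"
  using assms(2,3)
proof (induction bs arbitrary: x)
  case (Cons b bs)
  let ?m = "M + length bs"
  have "(2::real) \<le> 2 ^ Suc ?m"
    by simp
  then have "2 ^ Suc ?m + x \<noteq> 0"
    using Cons.prems(1) by linarith
  then have step: "zmeas_step (Suc ?m) b (rho (Suc ?m) x) = rho ?m (x / 2)"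
    using zmeas_step_rho assms(1) Cons.prems(2) by auto
  have "zmeas_seq (M + length (b # bs)) (b # bs) (rho (M + length (b # bs)) x)
      = zmeas_seq ?m bs (zmeas_step (Suc ?m) b (rho (Suc ?m) x))"
    by simp
  also have "\<dots> = rho M (x / 2 / 2 ^ length bs)"
    unfolding step using Cons.IH[of "x / 2"] Cons.prems by simp
  also have "x / 2 / 2 ^ length bs = x / 2 ^ length (b # bs)"
    by simp
  finally show ?case .
qed simp

definition bell_sign :: "nat \<Rightarrow> nat \<Rightarrow> nat \<Rightarrow> real" where
  "bell_sign a c i = (-1) ^ (a * bit i 0 + c * bit i 1)"

lemma sum_lessThan_two: "(\<Sum>a<2. f a) = f 0 + f (1 :: nat)"
  by (simp add: eval_nat_numeral)

lemma sum_lessThan_four: "(\<Sum>i<4. f i) = f 0 + f 1 + f 2 + f (3 :: nat)"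
  by (simp add: eval_nat_numeral)

lemma less_four_cases: "(i::nat) < 4 \<Longrightarrow> i = 0 \<or> i = 1 \<or> i = 2 \<or> i = 3"
  by auto

lemma bell_sign_orthogonal:
  assumes "a < 2" "c < 2"
  shows "(\<Sum>i<4. bell_sign a c i) = 4 * of_bool (a = 0 \<and> c = 0)"
  using less_2_cases[OF assms(1)] less_2_cases[OF assms(2)]
  by (auto simp: sum_lessThan_four bell_sign_def bit_def)

lemma bell_sign_complete:
  assumes "i < 4" "j < 4"
  shows "(\<Sum>a<2. \<Sum>c<2. bell_sign a c i * bell_sign a c j) = 4 * of_bool (i = j)"
  using less_four_cases[OF assms(1)] less_four_cases[OF assms(2)]
  by (auto simp: sum_lessThan_two bell_sign_def bit_def)

lemma dim_bell_basis [simp]: "dim_vec (bell_basis a c) = 4"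
  by (simp add: bell_basis_def pauliZ_def)

lemma bell_basis_index:
  assumes "i < 4"
  shows "bell_basis a c $ i = of_real (bell_sign a c i) * cluster_vec 2 $ i"
proof -
  have "bell_basis a c = mat_diag 4 (\<lambda>i. (-1) ^ (a * bit i 0 + c * bit i 1)) *\<^sub>v cluster_vec 2"
    by (simp add: bell_basis_def pauliZ_power power_add)
  then show ?thesis
    using assms by (simp add: mat_diag_mult_vec_index bell_sign_def)
qed

lemma cluster_vec_inner_bell_basis:
  assumes "a < 2" "c < 2"
  shows "(\<Sum>i<4. cnj (cluster_vec 2 $ i) * bell_basis a c $ i) = of_bool (a = 0 \<and> c = 0)"
proof -
  have summand: "cnj (cluster_vec 2 $ i) * bell_basis a c $ i = of_real (bell_sign a c i / 4)" if "i < 4" for i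
  proof -
    have "cnj (cluster_vec 2 $ i) * bell_basis a c $ i
        = of_real (bell_sign a c i) * (cnj (cluster_vec 2 $ i) * cluster_vec 2 $ i)"
      using that by (simp add: bell_basis_index mult_ac)
    also have "\<dots> = of_real (bell_sign a c i / 4)"
      using that by (simp add: cnj_mult_self cmod_cluster_vec_index)
    finally show ?thesis .
  qed
  have "(\<Sum>i<4. cnj (cluster_vec 2 $ i) * bell_basis a c $ i) = (\<Sum>i<4. of_real (bell_sign a c i / 4))"
    by (rule sum.cong) (simp_all add: summand)
  also have "\<dots> = of_real ((\<Sum>i<4. bell_sign a c i) / 4)"
    by (simp only: sum_divide_distrib of_real_sum)
  finally have "(\<Sum>i<4. cnj (cluster_vec 2 $ i) * bell_basis a c $ i) = of_real ((\<Sum>i<4. bell_sign a c i) / 4)" .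
  then show ?thesis
    using bell_sign_orthogonal[OF assms] by simp
qed

definition bell_mixture :: "(nat \<Rightarrow> nat \<Rightarrow> real) \<Rightarrow> complex mat" where
  "bell_mixture w = complex_of_real (w 0 0) \<cdot>\<^sub>m proj (bell_basis 0 0)
        + complex_of_real (w 0 1) \<cdot>\<^sub>m proj (bell_basis 0 1)
        + complex_of_real (w 1 0) \<cdot>\<^sub>m proj (bell_basis 1 0)
        + complex_of_real (w 1 1) \<cdot>\<^sub>m proj (bell_basis 1 1)"

lemma bell_mixture_index:
  assumes "i < 4" "j < 4"
  shows "bell_mixture w $$ (i, j) =
    of_real (\<Sum>a<2. \<Sum>c<2. w a c * bell_sign a c i * bell_sign a c j) * (cluster_vec 2 $ i * cnj (cluster_vec 2 $ j))"
  using assms by (simp add: bell_mixture_def proj_index bell_basis_index sum_lessThan_two algebra_simps)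

lemma fidelity_bell_mixture: "fidelity (cluster_vec 2) (bell_mixture w) = w 0 0"
  by (simp add: bell_mixture_def carrier_matI fidelity_add fidelity_smult_real fidelity_proj
      cluster_vec_inner_bell_basis)

lemma bell_mixture_rho_two: "rho 2 y = bell_mixture (\<lambda>a c. (1 + of_bool (a = 0 \<and> c = 0) * y) / (4 + y))"
proof (rule eq_matI)
  let ?w = "\<lambda>a c. (1 + of_bool (a = 0 \<and> c = 0) * y) / (4 + y)"
  fix i j
  assume "i < dim_row (bell_mixture ?w)" "j < dim_col (bell_mixture ?w)"
  then have ij: "i < 4" "j < 4"
    by (simp_all add: bell_mixture_def)
  have "(\<Sum>a<2. \<Sum>c<2. ?w a c * bell_sign a c i * bell_sign a c j)
      = ((\<Sum>a<2. \<Sum>c<2. bell_sign a c i * bell_sign a c j) + y) / (4 + y)"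
    by (simp add: sum_lessThan_two bell_sign_def add_divide_distrib algebra_simps)
  also have "\<dots> = (4 * of_bool (i = j) + y) / (4 + y)"
    by (simp add: bell_sign_complete ij)
  finally have w: "(\<Sum>a<2. \<Sum>c<2. ?w a c * bell_sign a c i * bell_sign a c j) = (4 * of_bool (i = j) + y) / (4 + y)" .
  have "i < 2 ^ 2" "j < 2 ^ 2" "sqrt (2 ^ 2) = (2::real)"
    using ij by simp_all
  then have "bell_mixture ?w $$ (i, j)
      = of_real ((4 * of_bool (i = j) + y) / (4 + y) * (cluster_sign 2 i / 2 * (cluster_sign 2 j / 2)))"
    by (simp only: bell_mixture_index[OF ij] w cluster_vec_index complex_cnj_complex_of_real of_real_mult)
  also have "(4 * of_bool (i = j) + y) / (4 + y) * (cluster_sign 2 i / 2 * (cluster_sign 2 j / 2))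
      = (of_bool (i = j) + y * cluster_sign 2 i * cluster_sign 2 j / 2 ^ 2) / (2 ^ 2 + y)"
    by (cases "i = j") (simp_all add: cluster_sign_square field_simps)
  finally show "rho 2 y $$ (i, j) = bell_mixture ?w $$ (i, j)"
    using ij by (simp only: rho_index \<open>i < 2 ^ 2\<close> \<open>j < 2 ^ 2\<close>)
qed (simp_all add: bell_mixture_def)

lemma purifiable_iff_bell_mixture:
  "purifiable A \<longleftrightarrow> (\<exists>w. (\<forall>a<2. \<forall>c<2. 0 \<le> w a c) \<and> A = bell_mixture w \<and> w 0 0 > 1 / 2)"
  by (simp only: purifiable_def bell_mixture_def)

lemma purifiable_bell_mixture_iff:
  assumes "\<forall>a<2. \<forall>c<2. 0 \<le> w a c"
  shows "purifiable (bell_mixture w) \<longleftrightarrow> fidelity (cluster_vec 2) (bell_mixture w) > 1 / 2"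
proof
  assume "purifiable (bell_mixture w)"
  then obtain w' where "bell_mixture w = bell_mixture w'" "w' 0 0 > 1 / 2"
    unfolding purifiable_iff_bell_mixture by blast
  then show "fidelity (cluster_vec 2) (bell_mixture w) > 1 / 2"
    by (simp add: fidelity_bell_mixture)
next
  assume "fidelity (cluster_vec 2) (bell_mixture w) > 1 / 2"
  then show "purifiable (bell_mixture w)"
    unfolding purifiable_iff_bell_mixture fidelity_bell_mixture using assms by blast
qed

lemma purifiable_rho_two_iff:
  assumes "y \<ge> -1"
  shows "purifiable (rho 2 y) \<longleftrightarrow> fidelity (cluster_vec 2) (rho 2 y) > 1 / 2"
proof -
  have "\<forall>a<2. \<forall>c<2. 0 \<le> (1 + of_bool (a = 0 \<and> c = 0) * y) / (4 + y)"
    using assms by simp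
  then show ?thesis
    unfolding bell_mixture_rho_two by (rule purifiable_bell_mixture_iff)
qed

lemma fidelity_rho_gt_iff:
  assumes "1 \<le> N" "x \<ge> -1"
  shows "fidelity (cluster_vec N) (rho N x) > 1 / 3 + 1 / (3 * 2 ^ (N - 1)) \<longleftrightarrow> x > 2 ^ (N - 1)"
proof -
  define K :: real where "K = 2 ^ (N - 1)"
  have K: "K \<ge> 1" "2 ^ N = 2 * K"
    using assms(1) by (simp_all add: K_def flip: power_Suc)
  have pos: "2 * K + x > 0"
    using K assms(2) by linarith
  have "fidelity (cluster_vec N) (rho N x) > 1 / 3 + 1 / (3 * K) \<longleftrightarrow> (1 + x) / (2 * K + x) > 1 / 3 + 1 / (3 * K)"
    by (simp add: fidelity_rho K)
  also have "\<dots> \<longleftrightarrow> 0 < (2 * K - 1) * (x - K)"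
    using K pos by (simp add: field_simps)
  also have "\<dots> \<longleftrightarrow> x > K"
    using K by (simp add: zero_less_mult_iff)
  finally show ?thesis
    unfolding K_def .
qed

lemma purifiable_rho_two_scaled_iff:
  assumes "2 \<le> N" "x \<ge> -1"
  shows "purifiable (rho 2 (x / 2 ^ (N - 2))) \<longleftrightarrow> x > 2 ^ (N - 1)"
proof -
  have "(1::real) \<le> 2 ^ (N - 2)"
    by simp
  then have "-(2 ^ (N - 2)) \<le> x"
    using assms(2) by linarith
  then have y: "-1 \<le> x / 2 ^ (N - 2)"
    by (simp add: le_divide_eq)
  \<comment> \<open>for two qubits the fidelity threshold is 1/3 + 1/6 = 1/2\<close>
  have "purifiable (rho 2 (x / 2 ^ (N - 2))) \<longleftrightarrow> x / 2 ^ (N - 2) > 2"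
    using purifiable_rho_two_iff[OF y] fidelity_rho_gt_iff[of 2, OF _ y] by simp
  also have "(2::real) ^ (N - 1) = 2 * 2 ^ (N - 2)"
    using assms(1) by (simp flip: power_Suc)
  then have "x / 2 ^ (N - 2) > 2 \<longleftrightarrow> x > 2 ^ (N - 1)"
    by (simp add: less_divide_eq mult.commute)
  finally show ?thesis .
qed

theorem mainTheorem7:
  fixes N :: nat and x :: real
  assumes "N \<ge> 2" and "x \<ge> -1"
  shows "(\<forall>b\<in>{0, 1}. zmeas_step N b (rho N x) = rho (N - 1) (x / 2))
    \<and> (\<forall>bs. length bs = N - 2 \<longrightarrow> set bs \<subseteq> {0, 1} \<longrightarrow>
          zmeas_seq N bs (rho N x) = rho 2 (x / 2 ^ (N - 2)))
    \<and> (purifiable (rho 2 (x / 2 ^ (N - 2))) \<longleftrightarrow>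
          fidelity (cluster_vec N) (rho N x) > 1 / 3 + 1 / (3 * 2 ^ (N - 1)))"
proof (intro conjI allI impI ballI)
  have "(2::real) \<le> 2 ^ N"
    using power_increasing[of 1 N "2::real"] assms(1) by simp
  then have "2 ^ Suc (N - 1) + x \<noteq> 0"
    using assms by simp
  then show "zmeas_step N b (rho N x) = rho (N - 1) (x / 2)" if "b \<in> {0, 1}" for b
    using zmeas_step_rho[of "N - 1" b x] that assms(1) by (auto simp: Suc_diff_Suc)
  show "zmeas_seq N bs (rho N x) = rho 2 (x / 2 ^ (N - 2))" if "length bs = N - 2" "set bs \<subseteq> {0, 1}" for bs
  proof -
    have "N = 2 + length bs"
      using that(1) assms(1) by simp
    then show ?thesis
      using zmeas_seq_rho[of 2 x bs] that(2) assms(2) by simp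
  qed
  show "purifiable (rho 2 (x / 2 ^ (N - 2))) \<longleftrightarrow>
      fidelity (cluster_vec N) (rho N x) > 1 / 3 + 1 / (3 * 2 ^ (N - 1))"
    using purifiable_rho_two_scaled_iff[OF assms] fidelity_rho_gt_iff[of N x] assms by simp
qed

end
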